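(* In the system $\mathbf{BTC}$ with summation (defined in the context), for every tuplix term $t$, every data variable $u$ and every data term $p$ with $u\notin\mathit{Var}(p)$, the following identities are derivable: \[ \textstyle\sum_u (t\oplus\gamma(u-p)) = t[p/u],\qquad \sum_u t = t[p/u]+\sum_u t,\qquad \sum_u t = t[p/u]+\sum_u (t\oplus\tilde\gamma(u-p)). \]
   Context: Data: a non-trivial cancellation meadow is a commutative ring with unit with a total unary operation $(\cdot)^{-1}$ satisfying $(u^{-1})^{-1}=u$, $u\cdot(u\cdot u^{-1})=u$, $0\neq 1$ and the cancellation law ($u\neq 0$ and $uv=uw$ imply $v=w$). Fix such a $\mathcal{D}$. Data terms are built from data variables, constants $0,1$, binary $+,\cdot$ and unary $-$, $(\cdot)^{-1}$; $p/q$ abbreviates $p\cdot q^{-1}$, $p-q$ abbreviates $p+(-q)$; $\mathit{Var}(p)$ is the set of data variables in $p$. Fix a nonempty attribute set $A$. Tuplix terms are built from tuplix variables, constants $\epsilon,\delta$, entries $a(p)$ ($a\in A$), zero tests $\gamma(p)$, binary operators $\oplus$ and $+$, and, for each data variable $u$, the unary binder $\sum_u$ (binding $u$). $\tilde\gamma(p)$ abbreviates $\gamma(1-p/p)$. $\mathit{FV}(t)$ is the set of free data variables of $t$, and $t[p/u]$ is capture-avoiding substitution of $p$ for the free occurrences of $u$ in $t$ (bound variables renamed as needed). The proof system (two-sorted equational logic) has axioms (T1) $x\oplus y=y\oplus x$; (T2) $(x\oplus y)\oplus z=x\oplus(y\oplus z)$; (T3) $x\oplus\epsilon=x$; (T4)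 $x\oplus\delta=\delta$; (T5) $a(u)\oplus a(v)=a(u+v)$; (T6) $\gamma(u)=\gamma(u/u)$; (T7) $\gamma(0)=\epsilon$; (T8) $\gamma(1)=\delta$; (T9) $\gamma(u)\oplus\gamma(v)=\gamma(u/u+v/v)$; (T10) $\gamma(u-v)\oplus a(u)=\gamma(u-v)\oplus a(v)$; (C1) $x+y=y+x$; (C2) $(x+y)+z=x+(y+z)$; (C3) $x+x=x$; (C4) $x+\delta=x$; (C5) $x\oplus(y+z)=(x\oplus y)+(x\oplus z)$; (C6) $\gamma(u)+\gamma(v)=\gamma(uv)$; and the schemes, for tuplix terms $s,t$ and data term $p$: (S1) $\sum_u t=t$ if $u\notin\mathit{FV}(t)$; (S2) $\sum_u t=\sum_v t[v/u]$ if $v\notin\mathit{FV}(t)$; (S3) $\sum_u(s\oplus t)=s\oplus\sum_u t$ if $u\notin\mathit{FV}(s)$; (S4) $\sum_u(s+t)=\sum_u s+\sum_u t$; (S5) $\sum_u\gamma(u-p)=\epsilon$ if $u\notin\mathit{Var}(p)$; (S6) $\sum_u\tilde\gamma(u-p)=\epsilon$ if $u\notin\mathit{Var}(p)$; plus the rule (DE): if $\mathcal{D}\models p=q$ then $\gamma(p)=\gamma(q)$. *)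

theory Defs
  imports Main
begin

text \<open>The fixed data structure D: the carrier is a type 'd of class comm_ring_1
  (commutative ring with unit), the total unary operation is the parameter ivs.\<close>

definition cancellation_meadow :: "('d::comm_ring_1 \<Rightarrow> 'd) \<Rightarrow> bool" where
  "cancellation_meadow ivs \<longleftrightarrow>
     (\<forall>u. ivs (ivs u) = u) \<and> (\<forall>u. u * (u * ivs u) = u) \<and> (0::'d) \<noteq> 1 \<and>
     (\<forall>u v w::'d. u \<noteq> 0 \<longrightarrow> u * v = u * w \<longrightarrow> v = w)"

datatype dterm = DVar nat | DZero | DOne | DAdd dterm dterm | DMul dterm dterm
  | DNeg dterm | DInv dterm

fun dvars :: "dterm \<Rightarrow> nat set" where
  "dvars (DVar u) = {u}"
| "dvars DZero = {}"
| "dvars DOne = {}"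
| "dvars (DAdd p q) = dvars p \<union> dvars q"
| "dvars (DMul p q) = dvars p \<union> dvars q"
| "dvars (DNeg p) = dvars p"
| "dvars (DInv p) = dvars p"

definition ddiv :: "dterm \<Rightarrow> dterm \<Rightarrow> dterm" where
  "ddiv p q = DMul p (DInv q)"

definition dminus :: "dterm \<Rightarrow> dterm \<Rightarrow> dterm" where
  "dminus p q = DAdd p (DNeg q)"

fun deval :: "('d::comm_ring_1 \<Rightarrow> 'd) \<Rightarrow> (nat \<Rightarrow> 'd) \<Rightarrow> dterm \<Rightarrow> 'd" where
  "deval ivs \<sigma> (DVar u) = \<sigma> u"
| "deval ivs \<sigma> DZero = 0"
| "deval ivs \<sigma> DOne = 1"
| "deval ivs \<sigma> (DAdd p q) = deval ivs \<sigma> p + deval ivs \<sigma> q"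
| "deval ivs \<sigma> (DMul p q) = deval ivs \<sigma> p * deval ivs \<sigma> q"
| "deval ivs \<sigma> (DNeg p) = - deval ivs \<sigma> p"
| "deval ivs \<sigma> (DInv p) = ivs (deval ivs \<sigma> p)"

definition dvalid :: "('d::comm_ring_1 \<Rightarrow> 'd) \<Rightarrow> dterm \<Rightarrow> dterm \<Rightarrow> bool" where
  "dvalid ivs p q \<longleftrightarrow> (\<forall>\<sigma>. deval ivs \<sigma> p = deval ivs \<sigma> q)"

fun dsubst :: "(nat \<Rightarrow> dterm) \<Rightarrow> dterm \<Rightarrow> dterm" where
  "dsubst \<sigma> (DVar u) = \<sigma> u"
| "dsubst \<sigma> DZero = DZero"
| "dsubst \<sigma> DOne = DOne"
| "dsubst \<sigma> (DAdd p q) = DAdd (dsubst \<sigma> p) (dsubst \<sigma> q)"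
| "dsubst \<sigma> (DMul p q) = DMul (dsubst \<sigma> p) (dsubst \<sigma> q)"
| "dsubst \<sigma> (DNeg p) = DNeg (dsubst \<sigma> p)"
| "dsubst \<sigma> (DInv p) = DInv (dsubst \<sigma> p)"

datatype 'a tterm = TVar nat | Eps | Delta | Entry 'a dterm | Gamma dterm
  | Oplus "'a tterm" "'a tterm" | Plus "'a tterm" "'a tterm" | Sum nat "'a tterm"

definition Gammat :: "dterm \<Rightarrow> 'a tterm" where
  "Gammat p = Gamma (dminus DOne (ddiv p p))"

fun fv :: "'a tterm \<Rightarrow> nat set" where
  "fv (TVar x) = {}"
| "fv Eps = {}"
| "fv Delta = {}"
| "fv (Entry a p) = dvars p"
| "fv (Gamma p) = dvars p"
| "fv (Oplus s t) = fv s \<union> fv t"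
| "fv (Plus s t) = fv s \<union> fv t"
| "fv (Sum v t) = fv t - {v}"

definition fresh :: "nat set \<Rightarrow> nat" where
  "fresh F = (LEAST w. w \<notin> F)"

text \<open>Capture-avoiding simultaneous substitution of data terms for free data
  variables; a bound variable is renamed (to a fresh one) only when needed.\<close>
fun tsubst :: "(nat \<Rightarrow> dterm) \<Rightarrow> 'a tterm \<Rightarrow> 'a tterm" where
  "tsubst \<sigma> (TVar x) = TVar x"
| "tsubst \<sigma> Eps = Eps"
| "tsubst \<sigma> Delta = Delta"
| "tsubst \<sigma> (Entry a p) = Entry a (dsubst \<sigma> p)"
| "tsubst \<sigma> (Gamma p) = Gamma (dsubst \<sigma> p)"
| "tsubst \<sigma> (Oplus s t) = Oplus (tsubst \<sigma> s) (tsubst \<sigma> t)"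
| "tsubst \<sigma> (Plus s t) = Plus (tsubst \<sigma> s) (tsubst \<sigma> t)"
| "tsubst \<sigma> (Sum v t) =
     (let S = (\<Union>x\<in>fv t - {v}. dvars (\<sigma> x));
          w = (if v \<in> S then fresh (S \<union> fv t) else v)
      in Sum w (tsubst (\<sigma>(v := DVar w)) t))"

definition subst1 :: "'a tterm \<Rightarrow> dterm \<Rightarrow> nat \<Rightarrow> 'a tterm" where
  "subst1 t p u = tsubst (DVar(u := p)) t"

inductive BTC :: "('d::comm_ring_1 \<Rightarrow> 'd) \<Rightarrow> 'a tterm \<Rightarrow> 'a tterm \<Rightarrow> bool"
  for ivs :: "'d \<Rightarrow> 'd" where
  refl: "BTC ivs t t"
| sym: "BTC ivs s t \<Longrightarrow> BTC ivs t s"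
| trans: "BTC ivs s t \<Longrightarrow> BTC ivs t r \<Longrightarrow> BTC ivs s r"
| cong_Oplus: "BTC ivs s s' \<Longrightarrow> BTC ivs t t' \<Longrightarrow> BTC ivs (Oplus s t) (Oplus s' t')"
| cong_Plus: "BTC ivs s s' \<Longrightarrow> BTC ivs t t' \<Longrightarrow> BTC ivs (Plus s t) (Plus s' t')"
| cong_Sum: "BTC ivs s t \<Longrightarrow> BTC ivs (Sum u s) (Sum u t)"
| T1: "BTC ivs (Oplus x y) (Oplus y x)"
| T2: "BTC ivs (Oplus (Oplus x y) z) (Oplus x (Oplus y z))"
| T3: "BTC ivs (Oplus x Eps) x"
| T4: "BTC ivs (Oplus x Delta) Delta"
| T5: "BTC ivs (Oplus (Entry a p) (Entry a q)) (Entry a (DAdd p q))"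
| T6: "BTC ivs (Gamma p) (Gamma (ddiv p p))"
| T7: "BTC ivs (Gamma DZero) Eps"
| T8: "BTC ivs (Gamma DOne) Delta"
| T9: "BTC ivs (Oplus (Gamma p) (Gamma q)) (Gamma (DAdd (ddiv p p) (ddiv q q)))"
| T10: "BTC ivs (Oplus (Gamma (dminus p q)) (Entry a p)) (Oplus (Gamma (dminus p q)) (Entry a q))"
| C1: "BTC ivs (Plus x y) (Plus y x)"
| C2: "BTC ivs (Plus (Plus x y) z) (Plus x (Plus y z))"
| C3: "BTC ivs (Plus x x) x"
| C4: "BTC ivs (Plus x Delta) x"
| C5: "BTC ivs (Oplus x (Plus y z)) (Plus (Oplus x y) (Oplus x z))"
| C6: "BTC ivs (Plus (Gamma p) (Gamma q)) (Gamma (DMul p q))"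
| S1: "u \<notin> fv t \<Longrightarrow> BTC ivs (Sum u t) t"
| S2: "v \<notin> fv t \<Longrightarrow> BTC ivs (Sum u t) (Sum v (subst1 t (DVar v) u))"
| S3: "u \<notin> fv s \<Longrightarrow> BTC ivs (Sum u (Oplus s t)) (Oplus s (Sum u t))"
| S4: "BTC ivs (Sum u (Plus s t)) (Plus (Sum u s) (Sum u t))"
| S5: "u \<notin> dvars p \<Longrightarrow> BTC ivs (Sum u (Gamma (dminus (DVar u) p))) Eps"
| S6: "u \<notin> dvars p \<Longrightarrow> BTC ivs (Sum u (Gammat (dminus (DVar u) p))) Eps"
| DE: "dvalid ivs p q \<Longrightarrow> BTC ivs (Gamma p) (Gamma q)"

end

theory Submission
  imports Defs
begin

text \<open>Under the guard \<open>\<gamma>(u - p)\<close> every occurrence of \<open>u\<close> may be replaced by \<open>p\<close>: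
  for a zero test this is rule DE applied to \<open>\<gamma>(a/a + r/r)\<close>, for an entry it is T10, and the
  remaining constructors are congruences (bound variables are renamed away from the guard by S2).
  Summing over \<open>u\<close> and applying S3 and S5 gives the first identity. Since
  \<open>\<gamma>(a) + \<tilde>\<gamma>(a) = \<gamma>(a(1 - a/a)) = \<gamma>(0) = \<epsilon>\<close>, distributing \<open>\<Sum>\<^sub>u t = \<Sum>\<^sub>u (t \<oplus> (\<gamma>(a) + \<tilde>\<gamma>(a)))\<close>
  with C5 and S4 gives the third, and idempotence of \<open>+\<close> turns it into the second.\<close>

lemmas BTC_trans [trans] = BTC.trans

lemma finite_dvars: "finite (dvars p)"
  by (induction p) auto

lemma finite_fv: "finite (fv t)"
  by (induction t) (auto simp: finite_dvars)

lemma deval_dsubst: "deval ivs env (dsubst \<sigma> q) = deval ivs (\<lambda>x. deval ivs env (\<sigma> x)) q"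
  by (induction q) auto

lemma deval_cong: "(\<And>x. x \<in> dvars q \<Longrightarrow> e1 x = e2 x) \<Longrightarrow> deval ivs e1 q = deval ivs e2 q"
  by (induction q) auto

lemma dsubst_cong: "(\<And>x. x \<in> dvars q \<Longrightarrow> \<sigma>1 x = \<sigma>2 x) \<Longrightarrow> dsubst \<sigma>1 q = dsubst \<sigma>2 q"
  by (induction q) auto

lemma dsubst_DVar: "dsubst DVar q = q"
  by (induction q) auto

lemma dvars_dsubst: "dvars (dsubst \<sigma> q) = (\<Union>y\<in>dvars q. dvars (\<sigma> y))"
  by (induction q) auto

lemma dsubst_dsubst: "dsubst \<tau> (dsubst \<rho> q) = dsubst (\<lambda>x. dsubst \<tau> (\<rho> x)) q"
  by (induction q) auto

lemma fresh_notin: "finite F \<Longrightarrow> fresh F \<notin> F"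
  unfolding fresh_def by (metis LeastI_ex ex_new_if_finite infinite_UNIV_nat)

lemma tsubst_Sum_obtain:
  obtains w where "w \<notin> (\<Union>x\<in>fv t - {v}. dvars (\<sigma> x))"
    and "tsubst \<sigma> (Sum v t) = Sum w (tsubst (\<sigma>(v := DVar w)) t)"
proof -
  define S where "S = (\<Union>x\<in>fv t - {v}. dvars (\<sigma> x))"
  have "finite S"
    unfolding S_def by (simp add: finite_fv finite_dvars)
  define w where "w = (if v \<in> S then fresh (S \<union> fv t) else v)"
  have "w \<notin> S"
    unfolding w_def using fresh_notin[of "S \<union> fv t"] \<open>finite S\<close> finite_fv[of t] by auto
  moreover have "tsubst \<sigma> (Sum v t) = Sum w (tsubst (\<sigma>(v := DVar w)) t)"
    unfolding w_def S_def by (simp add: Let_def)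
  ultimately show ?thesis
    using that unfolding S_def by blast
qed

lemma fv_tsubst: "fv (tsubst \<sigma> t) = (\<Union>x\<in>fv t. dvars (\<sigma> x))"
proof (induction t arbitrary: \<sigma>)
  case (Sum v t)
  obtain w where "w \<notin> (\<Union>x\<in>fv t - {v}. dvars (\<sigma> x))"
    and "tsubst \<sigma> (Sum v t) = Sum w (tsubst (\<sigma>(v := DVar w)) t)"
    by (rule tsubst_Sum_obtain)
  then show ?case
    by (auto simp: Sum split: if_splits)
qed (auto simp: dvars_dsubst)

lemma tsubst_cong: "\<forall>x\<in>fv t. \<sigma>1 x = \<sigma>2 x \<Longrightarrow> tsubst \<sigma>1 t = tsubst \<sigma>2 t"
proof (induction t arbitrary: \<sigma>1 \<sigma>2)
  case (Sum v t)
  have bound: "(\<Union>x\<in>fv t - {v}. dvars (\<sigma>1 x)) = (\<Union>x\<in>fv t - {v}. dvars (\<sigma>2 x))"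
    using Sum.prems by auto
  show ?case
    using Sum.prems by (simp add: Let_def bound) (intro conjI impI arg_cong[where f = "Sum _"] Sum.IH; auto)
qed (auto intro: dsubst_cong)

lemma tsubst_DVar: "tsubst DVar t = t"
  by (induction t) (auto simp: Let_def dsubst_DVar)

lemma tsubst_update_fresh:
  assumes "w \<notin> (\<Union>x\<in>fv t - {v}. dvars (\<rho> x))"
  shows "tsubst (\<lambda>x. dsubst (\<tau>(w := r)) ((\<rho>(v := DVar w)) x)) t
       = tsubst ((\<lambda>x. dsubst \<tau> (\<rho> x))(v := r)) t"
proof (rule tsubst_cong, intro ballI)
  fix x
  assume "x \<in> fv t"
  with assms have "x \<noteq> v \<Longrightarrow> dsubst (\<tau>(w := r)) (\<rho> x) = dsubst \<tau> (\<rho> x)"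
    by (intro dsubst_cong) auto
  then show "dsubst (\<tau>(w := r)) ((\<rho>(v := DVar w)) x) = ((\<lambda>x. dsubst \<tau> (\<rho> x))(v := r)) x"
    by auto
qed

text \<open>Syntactically, composing two capture-avoiding substitutions may choose different names
  for bound variables than the composed substitution; the results agree up to renaming, which
  S2 derives.\<close>

lemma BTC_Sum_rename_bound:
  assumes comp: "\<And>\<rho> \<tau>. BTC ivs (tsubst \<tau> (tsubst \<rho> t)) (tsubst (\<lambda>x. dsubst \<tau> (\<rho> x)) t)"
    and w1: "w1 \<notin> (\<Union>x\<in>fv t - {v}. dvars (\<theta> x))"
    and w2: "w2 \<notin> (\<Union>x\<in>fv t - {v}. dvars (\<theta> x))"
  shows "BTC ivs (Sum w1 (tsubst (\<theta>(v := DVar w1)) t)) (Sum w2 (tsubst (\<theta>(v := DVar w2)) t))"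
proof (cases "w1 = w2")
  case True
  then show ?thesis by (simp add: BTC.refl)
next
  case False
  let ?s = "tsubst (\<theta>(v := DVar w1)) t"
  have "w2 \<notin> fv ?s"
    using w2 False by (auto simp: fv_tsubst split: if_splits)
  then have "BTC ivs (Sum w1 ?s) (Sum w2 (subst1 ?s (DVar w2) w1))"
    by (rule BTC.S2)
  also have "BTC ivs \<dots> (Sum w2 (tsubst (\<lambda>x. dsubst (DVar(w1 := DVar w2)) ((\<theta>(v := DVar w1)) x)) t))"
    unfolding subst1_def by (intro BTC.cong_Sum comp)
  also have "\<dots> = Sum w2 (tsubst (\<theta>(v := DVar w2)) t)"
    using tsubst_update_fresh[OF w1, of DVar "DVar w2"] by (simp add: dsubst_DVar)
  finally show ?thesis .
qed

lemma BTC_tsubst_tsubst: "BTC ivs (tsubst \<tau> (tsubst \<rho> t)) (tsubst (\<lambda>x. dsubst \<tau> (\<rho> x)) t)"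
proof (induction t arbitrary: \<rho> \<tau>)
  case (Sum v t)
  define \<mu> where "\<mu> = (\<lambda>x. dsubst \<tau> (\<rho> x))"
  obtain w1 where w1: "w1 \<notin> (\<Union>x\<in>fv t - {v}. dvars (\<rho> x))"
    and e1: "tsubst \<rho> (Sum v t) = Sum w1 (tsubst (\<rho>(v := DVar w1)) t)"
    by (rule tsubst_Sum_obtain)
  obtain w2 where w2: "w2 \<notin> (\<Union>y\<in>fv (tsubst (\<rho>(v := DVar w1)) t) - {w1}. dvars (\<tau> y))"
    and e2: "tsubst \<tau> (Sum w1 (tsubst (\<rho>(v := DVar w1)) t))
       = Sum w2 (tsubst (\<tau>(w1 := DVar w2)) (tsubst (\<rho>(v := DVar w1)) t))"
    by (rule tsubst_Sum_obtain)
  obtain w3 where w3: "w3 \<notin> (\<Union>x\<in>fv t - {v}. dvars (\<mu> x))"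
    and e3: "tsubst \<mu> (Sum v t) = Sum w3 (tsubst (\<mu>(v := DVar w3)) t)"
    by (rule tsubst_Sum_obtain)
  have w2': "w2 \<notin> (\<Union>x\<in>fv t - {v}. dvars (\<mu> x))"
    using w1 w2 by (force simp: \<mu>_def dvars_dsubst fv_tsubst)
  have "BTC ivs (tsubst \<tau> (tsubst \<rho> (Sum v t)))
      (Sum w2 (tsubst (\<lambda>x. dsubst (\<tau>(w1 := DVar w2)) ((\<rho>(v := DVar w1)) x)) t))"
    unfolding e1 e2 by (intro BTC.cong_Sum Sum.IH)
  also have "\<dots> = Sum w2 (tsubst (\<mu>(v := DVar w2)) t)"
    unfolding \<mu>_def using tsubst_update_fresh[OF w1] by simp
  also have "BTC ivs \<dots> (tsubst \<mu> (Sum v t))"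
    unfolding e3 by (rule BTC_Sum_rename_bound[OF Sum.IH w2' w3])
  finally show ?case
    unfolding \<mu>_def .
qed (auto simp: dsubst_dsubst intro: BTC.intros)

lemma meadow_mult_inverse:
  fixes ivs :: "'d::comm_ring_1 \<Rightarrow> 'd"
  assumes "cancellation_meadow ivs" and "x \<noteq> 0"
  shows "x * ivs x = 1"
proof -
  have "x * (x * ivs x) = x * 1"
    using assms(1) unfolding cancellation_meadow_def by simp
  with assms show ?thesis
    unfolding cancellation_meadow_def by blast
qed

lemma meadow_mult_inverse_cases:
  fixes ivs :: "'d::comm_ring_1 \<Rightarrow> 'd"
  assumes "cancellation_meadow ivs"
  shows "x * ivs x = 0 \<or> x * ivs x = 1"
  using meadow_mult_inverse[OF assms, of x] by (cases "x = 0") auto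

lemma meadow_mult_mult_inverse:
  fixes ivs :: "'d::comm_ring_1 \<Rightarrow> 'd"
  assumes "cancellation_meadow ivs"
  shows "x * (x * ivs x) = x"
  using assms unfolding cancellation_meadow_def by simp

text \<open>In characteristic 2 the axioms collapse: \<open>\<epsilon> = \<gamma>(0) = \<gamma>(1/1 + 1/1) = \<gamma>(1) \<oplus> \<gamma>(1) = \<delta>\<close>.\<close>

lemma BTC_trivial_if_char_2:
  fixes ivs :: "'d::comm_ring_1 \<Rightarrow> 'd"
  assumes cm: "cancellation_meadow ivs" and two: "(1::'d) + 1 = 0"
  shows "BTC ivs s t"
proof -
  have "ivs 1 = 1"
    using meadow_mult_mult_inverse[OF cm, of 1] by simp
  then have valid: "dvalid ivs DZero (DAdd (ddiv DOne DOne) (ddiv DOne DOne))"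
    unfolding dvalid_def ddiv_def using two by simp
  have "BTC ivs Eps (Gamma DZero)" by (rule BTC.sym, rule BTC.T7)
  also have "BTC ivs \<dots> (Gamma (DAdd (ddiv DOne DOne) (ddiv DOne DOne)))" by (rule BTC.DE[OF valid])
  also have "BTC ivs \<dots> (Oplus (Gamma DOne) (Gamma DOne))" by (rule BTC.sym, rule BTC.T9)
  also have "BTC ivs \<dots> (Oplus Delta Delta)" by (intro BTC.cong_Oplus BTC.T8)
  also have "BTC ivs \<dots> Delta" by (rule BTC.T4)
  finally have Eps_Delta: "BTC ivs Eps Delta" .
  have to_Delta: "BTC ivs x Delta" for x :: "'a tterm"
  proof -
    have "BTC ivs x (Oplus x Eps)" by (rule BTC.sym, rule BTC.T3)
    also have "BTC ivs \<dots> (Oplus x Delta)" by (intro BTC.cong_Oplus BTC.refl Eps_Delta)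
    also have "BTC ivs \<dots> Delta" by (rule BTC.T4)
    finally show ?thesis .
  qed
  show ?thesis
    using BTC.trans[OF to_Delta BTC.sym[OF to_Delta]] .
qed

text \<open>Where \<open>a \<noteq> 0\<close>, the value of \<open>(a/a + r/r)/(a/a + r/r)\<close> is 1 whatever \<open>r\<close> is (this needs
  \<open>1 + 1 \<noteq> 0\<close>); where \<open>a = 0\<close> it only depends on \<open>r/r\<close>.\<close>

lemma BTC_Oplus_Gamma_Gamma_cong:
  fixes ivs :: "'d::comm_ring_1 \<Rightarrow> 'd"
  assumes cm: "cancellation_meadow ivs"
    and eq: "\<And>env. deval ivs env a = 0 \<Longrightarrow> deval ivs env r1 = deval ivs env r2"
  shows "BTC ivs (Oplus (Gamma a) (Gamma r1)) (Oplus (Gamma a) (Gamma r2))"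
proof (cases "(1::'d) + 1 = 0")
  case True
  then show ?thesis using BTC_trivial_if_char_2[OF cm] by blast
next
  case False
  have one_plus: "(1 + y * ivs y) * ivs (1 + y * ivs y) = 1" for y
    using meadow_mult_inverse_cases[OF cm, of y] False by (intro meadow_mult_inverse[OF cm]) auto
  define X1 where "X1 = DAdd (ddiv a a) (ddiv r1 r1)"
  define X2 where "X2 = DAdd (ddiv a a) (ddiv r2 r2)"
  have "dvalid ivs (ddiv X1 X1) (ddiv X2 X2)"
    unfolding dvalid_def
  proof
    fix env
    show "deval ivs env (ddiv X1 X1) = deval ivs env (ddiv X2 X2)"
    proof (cases "deval ivs env a = 0")
      case True
      then show ?thesis using eq[of env] by (simp add: X1_def X2_def ddiv_def)
    next
      case False
      then have "deval ivs env a * ivs (deval ivs env a) = 1" by (rule meadow_mult_inverse[OF cm])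
      then show ?thesis using one_plus by (simp add: X1_def X2_def ddiv_def)
    qed
  qed
  then have normalised: "BTC ivs (Gamma (ddiv X1 X1)) (Gamma (ddiv X2 X2))"
    by (rule BTC.DE)
  have "BTC ivs (Oplus (Gamma a) (Gamma r1)) (Gamma X1)" unfolding X1_def by (rule BTC.T9)
  also have "BTC ivs \<dots> (Gamma (ddiv X1 X1))" by (rule BTC.T6)
  also have "BTC ivs \<dots> (Gamma (ddiv X2 X2))" by (rule normalised)
  also have "BTC ivs \<dots> (Gamma X2)" by (rule BTC.sym, rule BTC.T6)
  also have "BTC ivs \<dots> (Oplus (Gamma a) (Gamma r2))" unfolding X2_def by (rule BTC.sym, rule BTC.T9)
  finally show ?thesis .
qed

lemma BTC_Oplus_Gamma_Entry_cong:
  fixes ivs :: "'d::comm_ring_1 \<Rightarrow> 'd"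
  assumes cm: "cancellation_meadow ivs"
    and eq: "\<And>env. deval ivs env a = 0 \<Longrightarrow> deval ivs env q1 = deval ivs env q2"
  shows "BTC ivs (Oplus (Gamma a) (Entry b q1)) (Oplus (Gamma a) (Entry b q2))"
proof -
  let ?g = "Gamma a" and ?d = "Gamma (dminus q1 q2)"
  have "BTC ivs (Oplus ?g ?d) (Oplus ?g (Gamma DZero))"
    using eq by (intro BTC_Oplus_Gamma_Gamma_cong[OF cm]) (simp add: dminus_def)
  also have "BTC ivs \<dots> (Oplus ?g Eps)" by (intro BTC.cong_Oplus BTC.refl BTC.T7)
  also have "BTC ivs \<dots> ?g" by (rule BTC.T3)
  finally have absorb: "BTC ivs (Oplus ?g ?d) ?g" .
  have "BTC ivs (Oplus ?g (Entry b q1)) (Oplus (Oplus ?g ?d) (Entry b q1))"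
    by (intro BTC.cong_Oplus BTC.refl BTC.sym[OF absorb])
  also have "BTC ivs \<dots> (Oplus ?g (Oplus ?d (Entry b q1)))" by (rule BTC.T2)
  also have "BTC ivs \<dots> (Oplus ?g (Oplus ?d (Entry b q2)))" by (intro BTC.cong_Oplus BTC.refl BTC.T10)
  also have "BTC ivs \<dots> (Oplus (Oplus ?g ?d) (Entry b q2))" by (rule BTC.sym, rule BTC.T2)
  also have "BTC ivs \<dots> (Oplus ?g (Entry b q2))" by (intro BTC.cong_Oplus BTC.refl absorb)
  finally show ?thesis .
qed

lemma BTC_Oplus_guard_Oplus:
  assumes "BTC ivs (Oplus g s1) (Oplus g s2)" and "BTC ivs (Oplus g t1) (Oplus g t2)"
  shows "BTC ivs (Oplus g (Oplus s1 t1)) (Oplus g (Oplus s2 t2))"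
proof -
  have "BTC ivs (Oplus g (Oplus s1 t1)) (Oplus (Oplus g s1) t1)" by (rule BTC.sym, rule BTC.T2)
  also have "BTC ivs \<dots> (Oplus (Oplus g s2) t1)" by (intro BTC.cong_Oplus BTC.refl assms(1))
  also have "BTC ivs \<dots> (Oplus (Oplus s2 g) t1)" by (intro BTC.cong_Oplus BTC.refl BTC.T1)
  also have "BTC ivs \<dots> (Oplus s2 (Oplus g t1))" by (rule BTC.T2)
  also have "BTC ivs \<dots> (Oplus s2 (Oplus g t2))" by (intro BTC.cong_Oplus BTC.refl assms(2))
  also have "BTC ivs \<dots> (Oplus (Oplus s2 g) t2)" by (rule BTC.sym, rule BTC.T2)
  also have "BTC ivs \<dots> (Oplus (Oplus g s2) t2)" by (intro BTC.cong_Oplus BTC.refl BTC.T1)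
  also have "BTC ivs \<dots> (Oplus g (Oplus s2 t2))" by (rule BTC.T2)
  finally show ?thesis .
qed

lemma BTC_Oplus_guard_Plus:
  assumes "BTC ivs (Oplus g s1) (Oplus g s2)" and "BTC ivs (Oplus g t1) (Oplus g t2)"
  shows "BTC ivs (Oplus g (Plus s1 t1)) (Oplus g (Plus s2 t2))"
proof -
  have "BTC ivs (Oplus g (Plus s1 t1)) (Plus (Oplus g s1) (Oplus g t1))" by (rule BTC.C5)
  also have "BTC ivs \<dots> (Plus (Oplus g s2) (Oplus g t2))" by (intro BTC.cong_Plus assms)
  also have "BTC ivs \<dots> (Oplus g (Plus s2 t2))" by (rule BTC.sym, rule BTC.C5)
  finally show ?thesis .
qed

lemma BTC_Oplus_guard_Sum:
  assumes "z \<notin> fv g" and "BTC ivs (Oplus g s) (Oplus g t)"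
  shows "BTC ivs (Oplus g (Sum z s)) (Oplus g (Sum z t))"
proof -
  have "BTC ivs (Oplus g (Sum z s)) (Sum z (Oplus g s))" by (rule BTC.sym, rule BTC.S3[OF assms(1)])
  also have "BTC ivs \<dots> (Sum z (Oplus g t))" by (rule BTC.cong_Sum[OF assms(2)])
  also have "BTC ivs \<dots> (Oplus g (Sum z t))" by (rule BTC.S3[OF assms(1)])
  finally show ?thesis .
qed

lemma BTC_Oplus_Gamma_tsubst_cong:
  fixes ivs :: "'d::comm_ring_1 \<Rightarrow> 'd"
  assumes cm: "cancellation_meadow ivs"
  shows "\<forall>x\<in>fv t. \<forall>env. deval ivs env a = 0 \<longrightarrow> deval ivs env (\<sigma>1 x) = deval ivs env (\<sigma>2 x)
    \<Longrightarrow> BTC ivs (Oplus (Gamma a) (tsubst \<sigma>1 t)) (Oplus (Gamma a) (tsubst \<sigma>2 t))"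
proof (induction t arbitrary: \<sigma>1 \<sigma>2)
  case (Entry b q)
  have "deval ivs env (dsubst \<sigma>1 q) = deval ivs env (dsubst \<sigma>2 q)" if "deval ivs env a = 0" for env
    unfolding deval_dsubst using Entry that by (intro deval_cong) auto
  then show ?case
    by (simp add: BTC_Oplus_Gamma_Entry_cong[OF cm])
next
  case (Gamma q)
  have "deval ivs env (dsubst \<sigma>1 q) = deval ivs env (dsubst \<sigma>2 q)" if "deval ivs env a = 0" for env
    unfolding deval_dsubst using Gamma that by (intro deval_cong) auto
  then show ?case
    by (simp add: BTC_Oplus_Gamma_Gamma_cong[OF cm])
next
  case (Oplus s t)
  show ?case
    using Oplus.prems by simp (intro BTC_Oplus_guard_Oplus Oplus.IH; auto)
next
  case (Plus s t)
  show ?case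
    using Plus.prems by simp (intro BTC_Oplus_guard_Plus Plus.IH; auto)
next
  case (Sum v t)
  obtain w1 where w1: "w1 \<notin> (\<Union>x\<in>fv t - {v}. dvars (\<sigma>1 x))"
    and e1: "tsubst \<sigma>1 (Sum v t) = Sum w1 (tsubst (\<sigma>1(v := DVar w1)) t)"
    by (rule tsubst_Sum_obtain)
  obtain w2 where w2: "w2 \<notin> (\<Union>x\<in>fv t - {v}. dvars (\<sigma>2 x))"
    and e2: "tsubst \<sigma>2 (Sum v t) = Sum w2 (tsubst (\<sigma>2(v := DVar w2)) t)"
    by (rule tsubst_Sum_obtain)
  define F where "F = (\<Union>x\<in>fv t - {v}. dvars (\<sigma>1 x)) \<union> (\<Union>x\<in>fv t - {v}. dvars (\<sigma>2 x)) \<union> dvars a"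
  define z where "z = fresh F"
  have "finite F"
    unfolding F_def by (simp add: finite_fv finite_dvars)
  then have "z \<notin> F"
    unfolding z_def by (rule fresh_notin)
  then have z1: "z \<notin> (\<Union>x\<in>fv t - {v}. dvars (\<sigma>1 x))" and z2: "z \<notin> (\<Union>x\<in>fv t - {v}. dvars (\<sigma>2 x))"
    and "z \<notin> dvars a"
    unfolding F_def by auto
  note rename = BTC_Sum_rename_bound[OF BTC_tsubst_tsubst]
  have "BTC ivs (Oplus (Gamma a) (Sum w1 (tsubst (\<sigma>1(v := DVar w1)) t)))
      (Oplus (Gamma a) (Sum z (tsubst (\<sigma>1(v := DVar z)) t)))"
    by (intro BTC.cong_Oplus BTC.refl rename[OF w1 z1])
  also have "BTC ivs \<dots> (Oplus (Gamma a) (Sum z (tsubst (\<sigma>2(v := DVar z)) t)))"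
    using Sum.prems \<open>z \<notin> dvars a\<close> by (intro BTC_Oplus_guard_Sum Sum.IH) auto
  also have "BTC ivs \<dots> (Oplus (Gamma a) (Sum w2 (tsubst (\<sigma>2(v := DVar w2)) t)))"
    by (intro BTC.cong_Oplus BTC.refl rename[OF z2 w2])
  finally show ?case
    unfolding e1 e2 .
qed (auto intro: BTC.refl)

lemma BTC_Sum_Oplus_Gamma_eq_subst1:
  fixes ivs :: "'d::comm_ring_1 \<Rightarrow> 'd"
  assumes cm: "cancellation_meadow ivs" and up: "u \<notin> dvars p"
  shows "BTC ivs (Sum u (Oplus t (Gamma (dminus (DVar u) p)))) (subst1 t p u)"
proof -
  let ?g = "Gamma (dminus (DVar u) p)" and ?t' = "subst1 t p u"
  have "BTC ivs (Oplus ?g (tsubst DVar t)) (Oplus ?g (tsubst (DVar(u := p)) t))"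
    by (rule BTC_Oplus_Gamma_tsubst_cong[OF cm]) (simp add: dminus_def eq_neg_iff_add_eq_0)
  then have guarded: "BTC ivs (Oplus ?g t) (Oplus ?g ?t')"
    by (simp add: tsubst_DVar subst1_def)
  have "u \<notin> fv ?t'"
    using up by (auto simp: subst1_def fv_tsubst split: if_splits)
  have "BTC ivs (Sum u (Oplus t ?g)) (Sum u (Oplus ?g t))" by (intro BTC.cong_Sum BTC.T1)
  also have "BTC ivs \<dots> (Sum u (Oplus ?g ?t'))" by (intro BTC.cong_Sum guarded)
  also have "BTC ivs \<dots> (Sum u (Oplus ?t' ?g))" by (intro BTC.cong_Sum BTC.T1)
  also have "BTC ivs \<dots> (Oplus ?t' (Sum u ?g))" by (rule BTC.S3[OF \<open>u \<notin> fv ?t'\<close>])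
  also have "BTC ivs \<dots> (Oplus ?t' Eps)" by (intro BTC.cong_Oplus BTC.refl BTC.S5 up)
  also have "BTC ivs \<dots> ?t'" by (rule BTC.T3)
  finally show ?thesis .
qed

lemma BTC_Plus_Gamma_Gammat:
  fixes ivs :: "'d::comm_ring_1 \<Rightarrow> 'd"
  assumes cm: "cancellation_meadow ivs"
  shows "BTC ivs (Plus (Gamma a) (Gammat a)) Eps"
proof -
  have "dvalid ivs (DMul a (dminus DOne (ddiv a a))) DZero"
    unfolding dvalid_def ddiv_def dminus_def
    using meadow_mult_mult_inverse[OF cm] by (simp add: algebra_simps)
  then have "BTC ivs (Gamma (DMul a (dminus DOne (ddiv a a)))) (Gamma DZero)"
    by (rule BTC.DE)
  then show ?thesis
    unfolding Gammat_def using BTC.trans[OF BTC.C6 BTC.trans[OF _ BTC.T7]] by blast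
qed

lemma BTC_Sum_split_Gamma_Gammat:
  fixes ivs :: "'d::comm_ring_1 \<Rightarrow> 'd"
  assumes cm: "cancellation_meadow ivs"
  shows "BTC ivs (Sum u t) (Plus (Sum u (Oplus t (Gamma a))) (Sum u (Oplus t (Gammat a))))"
proof -
  have "BTC ivs (Sum u t) (Sum u (Oplus t Eps))"
    by (intro BTC.cong_Sum BTC.sym[OF BTC.T3])
  also have "BTC ivs \<dots> (Sum u (Oplus t (Plus (Gamma a) (Gammat a))))"
    by (intro BTC.cong_Sum BTC.cong_Oplus BTC.refl BTC.sym[OF BTC_Plus_Gamma_Gammat[OF cm]])
  also have "BTC ivs \<dots> (Sum u (Plus (Oplus t (Gamma a)) (Oplus t (Gammat a))))"
    by (intro BTC.cong_Sum BTC.C5)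
  also have "BTC ivs \<dots> (Plus (Sum u (Oplus t (Gamma a))) (Sum u (Oplus t (Gammat a))))"
    by (rule BTC.S4)
  finally show ?thesis .
qed

lemma BTC_Plus_absorb:
  assumes "BTC ivs s (Plus r q)"
  shows "BTC ivs s (Plus r s)"
proof -
  have "BTC ivs s (Plus r q)" by (rule assms)
  also have "BTC ivs \<dots> (Plus (Plus r r) q)" by (intro BTC.cong_Plus BTC.refl BTC.sym[OF BTC.C3])
  also have "BTC ivs \<dots> (Plus r (Plus r q))" by (rule BTC.C2)
  also have "BTC ivs \<dots> (Plus r s)" by (intro BTC.cong_Plus BTC.refl BTC.sym[OF assms])
  finally show ?thesis .
qed

theorem lemma4:
  fixes ivs :: "'d::comm_ring_1 \<Rightarrow> 'd" and t :: "'a tterm" and u :: nat and p :: dterm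
  assumes "cancellation_meadow ivs"
    and "u \<notin> dvars p"
  shows "BTC ivs (Sum u (Oplus t (Gamma (dminus (DVar u) p)))) (subst1 t p u)
       \<and> BTC ivs (Sum u t) (Plus (subst1 t p u) (Sum u t))
       \<and> BTC ivs (Sum u t) (Plus (subst1 t p u) (Sum u (Oplus t (Gammat (dminus (DVar u) p)))))"
proof -
  let ?a = "dminus (DVar u) p"
  have first: "BTC ivs (Sum u (Oplus t (Gamma ?a))) (subst1 t p u)"
    using assms by (rule BTC_Sum_Oplus_Gamma_eq_subst1)
  have third: "BTC ivs (Sum u t) (Plus (subst1 t p u) (Sum u (Oplus t (Gammat ?a))))"
    using BTC.trans[OF BTC_Sum_split_Gamma_Gammat[OF assms(1)] BTC.cong_Plus[OF first BTC.refl]] .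
  then show ?thesis
    using first BTC_Plus_absorb[OF third] by blast
qed

end
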